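(* For deterministic algorithms, none of the following problems can be solved in time less than $\Omega(|G|)$: (1) given two Abelian groups $G$ and $H$, decide whether $G$ is isomorphic to $H$; (2) given an Abelian group $G$, find a basis for $G$; (3) given an Abelian group $G$, find generators for $G$ with relations of size at most $n^{o(1)}$, where $n=|G|$.
   Context: The algorithm accesses elements of the groups and queries their Cayley tables (products of pairs of elements), each access costing one unit of time. A basis of a finite Abelian group $G$ is a tuple $a_1,\ldots,a_t$ such that $G$ is the internal direct product of the nontrivial cyclic subgroups $\langle a_1\rangle,\ldots,\langle a_t\rangle$. Relations for generators are equations between products of powers of the generators that together determine the group; their size is their total description length. *)

theory Defs
  imports "HOL-Algebra.Algebra" "HOL-Analysis.Analysis"
begin

text \<open>A group of order n is presented to an algorithm by its Cayley table on the
labels 0..n-1 (an arbitrary labelling). The identity is not given; it is the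
unique left-neutral label.\<close>

definition tab_one :: "nat \<Rightarrow> (nat \<Rightarrow> nat \<Rightarrow> nat) \<Rightarrow> nat" where
  "tab_one n mul = (THE e. e < n \<and> (\<forall>x<n. mul e x = x))"

definition tab_grp :: "nat \<Rightarrow> (nat \<Rightarrow> nat \<Rightarrow> nat) \<Rightarrow> nat monoid" where
  "tab_grp n mul = \<lparr>carrier = {..<n}, monoid.mult = mul, one = tab_one n mul\<rparr>"

definition abtab :: "nat \<Rightarrow> (nat \<Rightarrow> nat \<Rightarrow> nat) \<Rightarrow> bool" where
  "abtab n mul \<longleftrightarrow> comm_group (tab_grp n mul)"

text \<open>Ask k i j queries the product i*j in the k-th input table (k = 0: G, k = 1: H);
each query costs one unit of time. An algorithm is a family of decision trees,
one for each input size n (the order of G).\<close>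

datatype 'o dtree = Leaf 'o | Ask nat nat nat "nat \<Rightarrow> 'o dtree"

primrec run :: "(nat \<Rightarrow> nat \<Rightarrow> nat \<Rightarrow> nat) \<Rightarrow> 'o dtree \<Rightarrow> 'o" where
  "run q (Leaf x) = x"
| "run q (Ask k i j f) = run q (f (q k i j))"

primrec cost :: "(nat \<Rightarrow> nat \<Rightarrow> nat \<Rightarrow> nat) \<Rightarrow> 'o dtree \<Rightarrow> nat" where
  "cost q (Leaf x) = 0"
| "cost q (Ask k i j f) = Suc (cost q (f (q k i j)))"

definition orc :: "nat \<Rightarrow> (nat \<Rightarrow> nat \<Rightarrow> nat) \<Rightarrow> nat \<Rightarrow> nat \<Rightarrow> nat \<Rightarrow> nat" where
  "orc n mul k i j = (if i < n \<and> j < n then mul i j else 0)"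

definition orc2 :: "nat \<Rightarrow> (nat \<Rightarrow> nat \<Rightarrow> nat) \<Rightarrow> (nat \<Rightarrow> nat \<Rightarrow> nat) \<Rightarrow> nat \<Rightarrow> nat \<Rightarrow> nat \<Rightarrow> nat" where
  "orc2 n mG mH k = (if k = 0 then orc n mG k else orc n mH k)"

text \<open>Worst-case running time not o(n), i.e. Omega(n) (lower bound sense):
there is c > 0 such that for infinitely many n some input of order n forces
at least c*n queries.\<close>

definition omega_lin :: "(nat \<Rightarrow> (nat \<Rightarrow> nat \<Rightarrow> nat \<Rightarrow> nat) set) \<Rightarrow> (nat \<Rightarrow> 'o dtree) \<Rightarrow> bool" where
  "omega_lin Inp A \<longleftrightarrow>
     (\<exists>c>0. \<exists>\<^sub>F n in sequentially. \<exists>q\<in>Inp n. c * real n \<le> real (cost q (A n)))"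

definition inputs1 :: "nat \<Rightarrow> (nat \<Rightarrow> nat \<Rightarrow> nat \<Rightarrow> nat) set" where
  "inputs1 n = {orc n mul | mul. abtab n mul}"

definition inputs2 :: "nat \<Rightarrow> (nat \<Rightarrow> nat \<Rightarrow> nat \<Rightarrow> nat) set" where
  "inputs2 n = {orc2 n mG mH | mG mH. abtab n mG \<and> abtab n mH}"

definition list_prod :: "('a, 'b) monoid_scheme \<Rightarrow> 'a list \<Rightarrow> 'a" where
  "list_prod G xs = foldr (\<lambda>x acc. x \<otimes>\<^bsub>G\<^esub> acc) xs \<one>\<^bsub>G\<^esub>"

definition internal_direct_product :: "('a, 'b) monoid_scheme \<Rightarrow> 'a set list \<Rightarrow> bool" where
  "internal_direct_product G Hs \<longleftrightarrow>
     (\<forall>H\<in>set Hs. subgroup H G) \<and>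
     bij_betw (list_prod G) {hs. length hs = length Hs \<and> (\<forall>i<length Hs. hs ! i \<in> Hs ! i)}
       (carrier G)"

definition is_basis :: "('a, 'b) monoid_scheme \<Rightarrow> 'a list \<Rightarrow> bool" where
  "is_basis G as \<longleftrightarrow> set as \<subseteq> carrier G \<and>
     (\<forall>a\<in>set as. generate G {a} \<noteq> {\<one>\<^bsub>G\<^esub>}) \<and>
     internal_direct_product G (map (\<lambda>a. generate G {a}) as)"

text \<open>A word is a list of (generator index, integer exponent); a relation is an
equation w1 = w2 between two words.\<close>

type_synonym word = "(nat \<times> int) list"
type_synonym relation = "word \<times> word"

definition eval_word :: "('a, 'b) monoid_scheme \<Rightarrow> 'a list \<Rightarrow> word \<Rightarrow> 'a" where
  "eval_word G gs w = list_prod G (map (\<lambda>(i, k). gs ! i [^]\<^bsub>G\<^esub> k) w)"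

definition expvec :: "nat \<Rightarrow> word \<Rightarrow> int list" where
  "expvec t w = map (\<lambda>i. sum_list (map snd (filter (\<lambda>p. fst p = i) w))) [0..<t]"

definition relvec :: "nat \<Rightarrow> relation \<Rightarrow> int list" where
  "relvec t r = map2 (-) (expvec t (fst r)) (expvec t (snd r))"

definition is_presentation :: "('a, 'b) monoid_scheme \<Rightarrow> 'a list \<Rightarrow> relation list \<Rightarrow> bool" where
  "is_presentation G gs rels \<longleftrightarrow>
     set gs \<subseteq> carrier G \<and> generate G (set gs) = carrier G \<and>
     (\<forall>r\<in>set rels. \<forall>(i, k)\<in>set (fst r) \<union> set (snd r). i < length gs) \<and>
     (\<forall>r\<in>set rels. eval_word G gs (fst r) = eval_word G gs (snd r)) \<and>
     (\<forall>v. length v = length gs \<and>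
          list_prod G (map (\<lambda>i. gs ! i [^]\<^bsub>G\<^esub> (v ! i)) [0..<length gs]) = \<one>\<^bsub>G\<^esub> \<longrightarrow>
          (\<exists>cs. length cs = length rels \<and>
             (\<forall>i<length gs. v ! i = (\<Sum>j<length rels. cs ! j * relvec (length gs) (rels ! j) ! i))))"

fun bitlen :: "nat \<Rightarrow> nat" where
  "bitlen m = (if m < 2 then 1 else Suc (bitlen (m div 2)))"

definition word_size :: "word \<Rightarrow> nat" where
  "word_size w = (\<Sum>(i, k)\<leftarrow>w. 1 + bitlen i + bitlen (nat \<bar>k\<bar>))"

definition rels_size :: "relation list \<Rightarrow> nat" where
  "rels_size rels = (\<Sum>r\<leftarrow>rels. 1 + word_size (fst r) + word_size (snd r))"

end

theory Submission
  imports Defs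
begin

(* For 4 dividing n, the cyclic group Z_n and Z_{n/2} x Z_2 are not isomorphic, yet with the
   encodings below their tables coincide on the even labels, which form a subgroup of index 2
   of both. An adversary fixes the labelling of the input table lazily: whenever the algorithm
   multiplies two labels it maps them, and the product, into the even labels, so each query
   commits at most three labels. With fewer than n/12 queries it can therefore keep both
   groups consistent with every answer (isomorphism testing), and it still has room to map a
   short output list into the even labels, which then generate only a proper subgroup. A basis
   has at most log n elements, and in a presentation every generator occurs in some relation,
   so relations of size n^o(1) have fewer than n/4 generators. *)

lemma carrier_tab_grp [simp]: "carrier (tab_grp n mul) = {..<n}"
  and mult_tab_grp [simp]: "x \<otimes>\<^bsub>tab_grp n mul\<^esub> y = mul x y"
  by (simp_all add: tab_grp_def)

lemma tab_grp_eqI: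
  assumes "comm_group \<lparr>carrier = {..<n}, monoid.mult = mul, one = e\<rparr>"
  shows "tab_grp n mul = \<lparr>carrier = {..<n}, monoid.mult = mul, one = e\<rparr>"
proof -
  interpret comm_group "\<lparr>carrier = {..<n}, monoid.mult = mul, one = e\<rparr>" by fact
  have "tab_one n mul = e"
    unfolding tab_one_def
  proof (rule the_equality)
    show "e < n \<and> (\<forall>x<n. mul e x = x)"
      using one_closed l_one by auto
    show "u = e" if "u < n \<and> (\<forall>x<n. mul u x = x)" for u
      using one_unique[of u] that by auto
  qed
  then show ?thesis by (simp add: tab_grp_def)
qed

lemma abtabI: "comm_group \<lparr>carrier = {..<n}, monoid.mult = mul, one = e\<rparr> \<Longrightarrow> abtab n mul"
  using tab_grp_eqI by (simp add: abtab_def)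

lemma abtab_group: "abtab n mul \<Longrightarrow> group (tab_grp n mul)"
  by (simp add: abtab_def comm_group_def)

lemma abtab_closed:
  assumes "abtab n mul" "a < n" "b < n"
  shows "mul a b < n"
  using monoid.m_closed[OF group.is_monoid[OF abtab_group[OF assms(1)]], of a b] assms by simp

definition relabel :: "nat \<Rightarrow> (nat \<Rightarrow> nat) \<Rightarrow> (nat \<Rightarrow> nat \<Rightarrow> nat) \<Rightarrow> nat \<Rightarrow> nat \<Rightarrow> nat" where
  "relabel n \<sigma> mul a b = inv_into {..<n} \<sigma> (mul (\<sigma> a) (\<sigma> b))"

lemma relabel_eqI:
  assumes "bij_betw \<sigma> {..<n} {..<n}" "a < n" "\<sigma> a = mul (\<sigma> i) (\<sigma> j)"
  shows "relabel n \<sigma> mul i j = a"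
  unfolding relabel_def
  by (rule inv_into_f_eq) (use assms in \<open>auto simp: bij_betw_def\<close>)

lemma relabel_iso:
  assumes "abtab n mul" "bij_betw \<sigma> {..<n} {..<n}"
  shows "\<sigma> \<in> iso (tab_grp n (relabel n \<sigma> mul)) (tab_grp n mul)"
proof -
  have "\<sigma> x < n" if "x < n" for x
    using bij_betwE[OF assms(2)] that by simp
  then have "\<sigma> (relabel n \<sigma> mul a b) = mul (\<sigma> a) (\<sigma> b)" if "a < n" "b < n" for a b
    unfolding relabel_def using that bij_betw_inv_into_right[OF assms(2)] abtab_closed[OF assms(1)] by simp
  then show ?thesis
    using assms(2) by (auto simp: iso_def hom_def bij_betw_def)
qed

lemma relabel_inv_iso:
  assumes "abtab n mul" "bij_betw \<sigma> {..<n} {..<n}"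
  shows "inv_into {..<n} \<sigma> \<in> iso (tab_grp n mul) (tab_grp n (relabel n \<sigma> mul))"
proof -
  have "inv_into {..<n} \<sigma> (mul x y) = relabel n \<sigma> mul (inv_into {..<n} \<sigma> x) (inv_into {..<n} \<sigma> y)"
    if "x < n" "y < n" for x y
    using that bij_betw_inv_into_right[OF assms(2)] by (simp add: relabel_def)
  then show ?thesis
    using bij_betw_inv_into[OF assms(2)] by (auto simp: iso_def hom_def bij_betw_def)
qed

lemma abtab_relabel:
  assumes "abtab n mul" "bij_betw \<sigma> {..<n} {..<n}"
  shows "abtab n (relabel n \<sigma> mul)"
proof -
  have "comm_group (tab_grp n (relabel n \<sigma> mul)\<lparr>one := inv_into {..<n} \<sigma> \<one>\<^bsub>tab_grp n mul\<^esub>\<rparr>)"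
    using assms(1) relabel_inv_iso[OF assms]
    by (auto simp: abtab_def intro: comm_group.iso_imp_img_comm_group)
  then show ?thesis
    by (intro abtabI) (simp add: tab_grp_def)
qed

lemma relabel_is_iso:
  assumes "abtab n mul" "bij_betw \<sigma> {..<n} {..<n}"
  shows "tab_grp n mul \<cong> tab_grp n (relabel n \<sigma> mul)"
  using relabel_inv_iso[OF assms] by (auto simp: is_iso_def)

section \<open>The adversary\<close>

definition table_oracle :: "nat \<Rightarrow> ((nat \<Rightarrow> nat \<Rightarrow> nat) \<Rightarrow> nat \<Rightarrow> nat \<Rightarrow> nat \<Rightarrow> nat) \<Rightarrow> bool" where
  "table_oracle n Q \<longleftrightarrow> (\<forall>k i j. (\<forall>mul mul'. Q mul k i j = Q mul' k i j) \<or>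
                                   (i < n \<and> j < n \<and> (\<forall>mul. Q mul k i j = mul i j)))"

lemma table_oracle_orc: "table_oracle n (orc n)"
  unfolding table_oracle_def
proof (intro allI)
  fix k i j
  show "(\<forall>mul mul'. orc n mul k i j = orc n mul' k i j) \<or> (i < n \<and> j < n \<and> (\<forall>mul. orc n mul k i j = mul i j))"
    by (cases "i < n \<and> j < n") (auto simp: orc_def)
qed

lemma table_oracle_orc2: "table_oracle n (orc2 n mG)"
  unfolding table_oracle_def
proof (intro allI)
  fix k i j
  show "(\<forall>mul mul'. orc2 n mG mul k i j = orc2 n mG mul' k i j) \<or>
        (i < n \<and> j < n \<and> (\<forall>mul. orc2 n mG mul k i j = mul i j))"
    by (cases "i < n \<and> j < n") (auto simp: orc2_def orc_def)
qed

text \<open>The adversary's commitment so far: the final relabelling agrees with \<open>f\<close> on \<open>D\<close>, and all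
  committed labels are sent into \<open>V\<close>.\<close>

definition partial_relabelling :: "nat \<Rightarrow> nat set \<Rightarrow> nat set \<Rightarrow> (nat \<Rightarrow> nat) \<Rightarrow> bool" where
  "partial_relabelling n V D f \<longleftrightarrow> D \<subseteq> {..<n} \<and> inj_on f D \<and> f ` D \<subseteq> V"

lemma partial_relabelling_insert:
  assumes "partial_relabelling n V D f" "x < n" "x \<notin> D" "y \<in> V" "y \<notin> f ` D"
  shows "partial_relabelling n V (insert x D) (f(x := y))"
  using assms by (auto simp: partial_relabelling_def inj_on_def)

lemma partial_relabelling_finite: "partial_relabelling n V D f \<Longrightarrow> finite D"
  by (auto simp: partial_relabelling_def intro: finite_subset)

lemma partial_relabelling_cover:
  assumes "partial_relabelling n V D f" "finite V" "set xs \<subseteq> {..<n}" "card (D \<union> set xs) \<le> card V"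
  shows "\<exists>f'. partial_relabelling n V (D \<union> set xs) f' \<and> (\<forall>x\<in>D. f' x = f x)"
  using assms
proof (induction xs arbitrary: D f)
  case Nil
  then show ?case by auto
next
  case (Cons x xs)
  have finD: "finite D"
    using partial_relabelling_finite[OF Cons.prems(1)] .
  obtain f1 where f1: "partial_relabelling n V (insert x D) f1" "\<forall>y\<in>D. f1 y = f y"
  proof (cases "x \<in> D")
    case True
    then show ?thesis
      using that[of f] Cons.prems(1) by (simp add: insert_absorb)
  next
    case False
    have "card (insert x D) \<le> card (D \<union> set (x # xs))"
      using finD by (intro card_mono) auto
    then have "Suc (card D) \<le> card V"
      using Cons.prems(4) finD False by simp
    then have "card (f ` D) < card V"
      using card_image_le[OF finD, of f] by linarith
    then have "\<not> V \<subseteq> f ` D"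
      using card_mono[of "f ` D" V] finD by auto
    then obtain y where "y \<in> V" "y \<notin> f ` D"
      by blast
    then have "partial_relabelling n V (insert x D) (f(x := y))"
      using partial_relabelling_insert[OF Cons.prems(1) _ False] Cons.prems(3) by simp
    then show ?thesis
      using that[of "f(x := y)"] False by simp
  qed
  have "insert x D \<union> set xs = D \<union> set (x # xs)"
    by auto
  moreover have "set xs \<subseteq> {..<n}"
    using Cons.prems(3) by simp
  ultimately obtain f2 where "partial_relabelling n V (D \<union> set (x # xs)) f2" "\<forall>y\<in>insert x D. f2 y = f1 y"
    using Cons.IH[OF f1(1) Cons.prems(2)] Cons.prems(4) by metis
  with f1(2) show ?case
    by (intro exI[of _ f2]) simp
qed

lemma partial_relabelling_permutation:
  assumes "partial_relabelling n V D f" "V \<subseteq> {..<n}"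
  shows "\<exists>\<sigma>. bij_betw \<sigma> {..<n} {..<n} \<and> (\<forall>x\<in>D. \<sigma> x = f x)"
proof -
  have "partial_relabelling n {..<n} D f"
    using assms by (auto simp: partial_relabelling_def)
  moreover have D: "D \<union> set [0..<n] = {..<n}"
    using assms(1) by (auto simp: partial_relabelling_def)
  ultimately obtain \<sigma> where \<sigma>: "partial_relabelling n {..<n} {..<n} \<sigma>" "\<forall>x\<in>D. \<sigma> x = f x"
    using partial_relabelling_cover[of n "{..<n}" D f "[0..<n]"] by auto
  then have "\<sigma> ` {..<n} = {..<n}"
    by (intro endo_inj_surj) (auto simp: partial_relabelling_def)
  with \<sigma> show ?thesis
    by (auto simp: bij_betw_def partial_relabelling_def)
qed

lemma partial_relabelling_permutation_covering:
  assumes "partial_relabelling n V D f" "V \<subseteq> {..<n}" "set xs \<subseteq> {..<n}" "card D + length xs \<le> card V"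
  shows "\<exists>\<sigma>. bij_betw \<sigma> {..<n} {..<n} \<and> (\<forall>x\<in>D. \<sigma> x = f x) \<and> \<sigma> ` set xs \<subseteq> V"
proof -
  have "card (D \<union> set xs) \<le> card V"
    using card_Un_le[of D "set xs"] card_length[of xs] assms(4) by linarith
  then obtain f' where f': "partial_relabelling n V (D \<union> set xs) f'" "\<forall>x\<in>D. f' x = f x"
    using partial_relabelling_cover[OF assms(1) finite_subset[OF assms(2)] assms(3)] by blast
  then obtain \<sigma> where "bij_betw \<sigma> {..<n} {..<n}" "\<forall>x\<in>D \<union> set xs. \<sigma> x = f' x"
    using partial_relabelling_permutation assms(2) by blast
  with f' show ?thesis
    by (intro exI[of _ \<sigma>]) (auto simp: partial_relabelling_def)
qed

lemma partial_relabelling_hit: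
  assumes f: "partial_relabelling n V D f" and "card D < n" "w \<in> V"
  shows "\<exists>a f'. a < n \<and> partial_relabelling n V (insert a D) f' \<and> f' a = w \<and> (\<forall>x\<in>D. f' x = f x)"
proof (cases "w \<in> f ` D")
  case True
  then obtain a where "a \<in> D" "f a = w"
    by blast
  with f show ?thesis
    by (intro exI[of _ a] exI[of _ f]) (auto simp: partial_relabelling_def insert_absorb)
next
  case False
  have "\<not> {..<n} \<subseteq> D"
    using card_mono[OF partial_relabelling_finite[OF f], of "{..<n}"] assms(2) by auto
  then obtain a where "a < n" "a \<notin> D"
    by auto
  with False show ?thesis
    using partial_relabelling_insert[OF f _ _ assms(3)]
    by (intro exI[of _ a] exI[of _ "f(a := w)"]) auto
qed

lemma adversary_query:
  assumes Q: "table_oracle n Q" and V: "V \<subseteq> {..<n}"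
    and agree: "\<And>a b. a \<in> V \<Longrightarrow> b \<in> V \<Longrightarrow> opA a b = opB a b \<and> opB a b \<in> V"
    and f: "partial_relabelling n V D f" and room: "card D + 3 \<le> card V"
  shows "\<exists>a D' f'. partial_relabelling n V D' f' \<and> D \<subseteq> D' \<and> card D' \<le> card D + 3 \<and>
           (\<forall>x\<in>D. f' x = f x) \<and>
           (\<forall>\<sigma>. bij_betw \<sigma> {..<n} {..<n} \<longrightarrow> (\<forall>x\<in>D'. \<sigma> x = f' x) \<longrightarrow>
              Q (relabel n \<sigma> opA) k i j = a \<and> Q (relabel n \<sigma> opB) k i j = a)"
proof (cases "\<forall>mul mul'. Q mul k i j = Q mul' k i j")
  case True
  with f show ?thesis
    by (intro exI[of _ "Q opA k i j"] exI[of _ D] exI[of _ f]) auto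
next
  case False
  then have ij: "i < n" "j < n" and lookup: "\<And>mul. Q mul k i j = mul i j"
    using Q unfolding table_oracle_def by blast+
  have finD: "finite D"
    using partial_relabelling_finite[OF f] .
  have cardV: "card V \<le> n"
    using card_mono[OF _ V] by simp
  have "card {i, j} \<le> 2"
    by (simp add: card_insert_if)
  then have card_ij: "card (D \<union> {i, j}) \<le> card D + 2"
    using card_Un_le[of D "{i, j}"] by simp
  obtain f1 where f1: "partial_relabelling n V (D \<union> {i, j}) f1" "\<forall>x\<in>D. f1 x = f x"
    using partial_relabelling_cover[OF f finite_subset[OF V], of "[i, j]"] ij card_ij room by auto
  define w where "w = opB (f1 i) (f1 j)"
  have "f1 i \<in> V" "f1 j \<in> V"
    using f1(1) by (auto simp: partial_relabelling_def)
  then have w: "w \<in> V" "opA (f1 i) (f1 j) = w"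
    using agree by (auto simp: w_def)
  obtain a f2 where a: "a < n" "f2 a = w" "\<forall>x\<in>D \<union> {i, j}. f2 x = f1 x"
    and f2: "partial_relabelling n V (insert a (D \<union> {i, j})) f2"
    using partial_relabelling_hit[OF f1(1) _ w(1)] card_ij room cardV by fastforce
  have "relabel n \<sigma> opA i j = a \<and> relabel n \<sigma> opB i j = a"
    if "bij_betw \<sigma> {..<n} {..<n}" "\<forall>x\<in>insert a (D \<union> {i, j}). \<sigma> x = f2 x" for \<sigma>
    using that a w by (auto simp: w_def intro!: relabel_eqI)
  moreover have "card (insert a (D \<union> {i, j})) \<le> card D + 3"
    using card_ij finD by (simp add: card_insert_if)
  ultimately show ?thesis
    using f2 f1(2) a(3) lookup
    by (intro exI[of _ a] exI[of _ "insert a (D \<union> {i, j})"] exI[of _ f2]) auto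
qed

lemma adversary_extending:
  fixes t :: "'o dtree" and labels :: "'o \<Rightarrow> nat list"
  assumes Q: "table_oracle n Q" and V: "V \<subseteq> {..<n}"
    and agree: "\<And>a b. a \<in> V \<Longrightarrow> b \<in> V \<Longrightarrow> opA a b = opB a b \<and> opB a b \<in> V"
  shows "partial_relabelling n V D f \<Longrightarrow> card D + 3 * K + L \<le> card V \<Longrightarrow>
    \<exists>\<sigma>. bij_betw \<sigma> {..<n} {..<n} \<and> (\<forall>x\<in>D. \<sigma> x = f x) \<and>
      (K \<le> cost (Q (relabel n \<sigma> opA)) t \<or>
       run (Q (relabel n \<sigma> opA)) t = run (Q (relabel n \<sigma> opB)) t \<and>
       (set (labels (run (Q (relabel n \<sigma> opA)) t)) \<subseteq> {..<n} \<longrightarrow>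
        length (labels (run (Q (relabel n \<sigma> opA)) t)) \<le> L \<longrightarrow>
        \<sigma> ` set (labels (run (Q (relabel n \<sigma> opA)) t)) \<subseteq> V))"
proof (induction t arbitrary: D f K)
  case (Leaf r)
  define xs where "xs = (if set (labels r) \<subseteq> {..<n} \<and> length (labels r) \<le> L then labels r else [])"
  have "set xs \<subseteq> {..<n}" "card D + length xs \<le> card V"
    using Leaf.prems(2) by (auto simp: xs_def)
  then obtain \<sigma> where "bij_betw \<sigma> {..<n} {..<n}" "\<forall>x\<in>D. \<sigma> x = f x" "\<sigma> ` set xs \<subseteq> V"
    using partial_relabelling_permutation_covering[OF Leaf.prems(1) V] by blast
  then show ?case
    by (intro exI[of _ \<sigma>]) (auto simp: xs_def)
next
  case (Ask k i j g)
  show ?case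
  proof (cases K)
    case 0
    then show ?thesis
      using partial_relabelling_permutation[OF Ask.prems(1) V] by auto
  next
    case (Suc K')
    obtain a D' f' where f': "partial_relabelling n V D' f'" "D \<subseteq> D'" "card D' \<le> card D + 3"
        "\<forall>x\<in>D. f' x = f x"
      and answer: "\<And>\<sigma>. bij_betw \<sigma> {..<n} {..<n} \<Longrightarrow> \<forall>x\<in>D'. \<sigma> x = f' x \<Longrightarrow>
          Q (relabel n \<sigma> opA) k i j = a \<and> Q (relabel n \<sigma> opB) k i j = a"
      using adversary_query[where opA = opA and opB = opB and k = k and i = i and j = j,
          OF Q V agree Ask.prems(1)] Ask.prems(2) Suc
      by auto
    have "card D' + 3 * K' + L \<le> card V"
      using f'(3) Ask.prems(2) Suc by simp
    then obtain \<sigma> where \<sigma>: "bij_betw \<sigma> {..<n} {..<n}" "\<forall>x\<in>D'. \<sigma> x = f' x"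
      and outcome: "K' \<le> cost (Q (relabel n \<sigma> opA)) (g a) \<or>
       run (Q (relabel n \<sigma> opA)) (g a) = run (Q (relabel n \<sigma> opB)) (g a) \<and>
       (set (labels (run (Q (relabel n \<sigma> opA)) (g a))) \<subseteq> {..<n} \<longrightarrow>
        length (labels (run (Q (relabel n \<sigma> opA)) (g a))) \<le> L \<longrightarrow>
        \<sigma> ` set (labels (run (Q (relabel n \<sigma> opA)) (g a))) \<subseteq> V)"
      using Ask.IH[OF rangeI f'(1)] by blast
    show ?thesis
      using \<sigma> outcome answer[OF \<sigma>] f'(2,4) Suc by (intro exI[of _ \<sigma>]) auto
  qed
qed

lemma adversary:
  fixes t :: "'o dtree" and labels :: "'o \<Rightarrow> nat list"
  assumes "table_oracle n Q" "V \<subseteq> {..<n}"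
    and "\<And>a b. a \<in> V \<Longrightarrow> b \<in> V \<Longrightarrow> opA a b = opB a b \<and> opB a b \<in> V"
    and "3 * K + L \<le> card V"
  shows "\<exists>\<sigma>. bij_betw \<sigma> {..<n} {..<n} \<and>
      (K \<le> cost (Q (relabel n \<sigma> opA)) t \<or>
       run (Q (relabel n \<sigma> opA)) t = run (Q (relabel n \<sigma> opB)) t \<and>
       (set (labels (run (Q (relabel n \<sigma> opA)) t)) \<subseteq> {..<n} \<longrightarrow>
        length (labels (run (Q (relabel n \<sigma> opA)) t)) \<le> L \<longrightarrow>
        \<sigma> ` set (labels (run (Q (relabel n \<sigma> opA)) t)) \<subseteq> V))"
  using adversary_extending[OF assms(1-3), where D = "{}" and f = id] assms(4)
  by (auto simp: partial_relabelling_def)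

section \<open>Two groups agreeing on the even labels\<close>

definition cyclic_mul :: "nat \<Rightarrow> nat \<Rightarrow> nat \<Rightarrow> nat" where
  "cyclic_mul n a b = (a + b) mod n"

text \<open>Label \<open>2 * x + y\<close> with \<open>y < 2\<close> stands for \<open>(x, y)\<close> in \<open>Z\<^bsub>n/2\<^esub> \<times> Z\<^sub>2\<close>.\<close>

definition bicyclic_mul :: "nat \<Rightarrow> nat \<Rightarrow> nat \<Rightarrow> nat" where
  "bicyclic_mul n a b = 2 * ((a div 2 + b div 2) mod (n div 2)) + (a + b) mod 2"

lemma bicyclic_mul_div2 [simp]: "bicyclic_mul n a b div 2 = (a div 2 + b div 2) mod (n div 2)"
  and bicyclic_mul_mod2 [simp]: "bicyclic_mul n a b mod 2 = (a + b) mod 2"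
  by (simp_all add: bicyclic_mul_def)

lemma bicyclic_mul_commute: "bicyclic_mul n a b = bicyclic_mul n b a"
  by (simp add: bicyclic_mul_def add.commute)

lemma nat_eq_via_div2_mod2: "a div 2 = b div 2 \<Longrightarrow> a mod 2 = b mod 2 \<Longrightarrow> a = (b::nat)"
  by (metis div_mult_mod_eq)

lemma bicyclic_mul_assoc: "bicyclic_mul n (bicyclic_mul n a b) c = bicyclic_mul n a (bicyclic_mul n b c)"
proof (rule nat_eq_via_div2_mod2)
  show "bicyclic_mul n (bicyclic_mul n a b) c mod 2 = bicyclic_mul n a (bicyclic_mul n b c) mod 2"
    using mod_add_left_eq[of "bicyclic_mul n a b" 2 c] mod_add_right_eq[of a "bicyclic_mul n b c" 2]
    by (simp add: mod_add_left_eq mod_add_right_eq add.assoc)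
qed (simp add: mod_add_left_eq mod_add_right_eq add.assoc)

lemma bicyclic_mul_0: "a div 2 < n div 2 \<Longrightarrow> bicyclic_mul n 0 a = a"
  by (rule nat_eq_via_div2_mod2) simp_all

lemma bicyclic_mul_inverse:
  "a div 2 < n div 2 \<Longrightarrow> bicyclic_mul n (2 * ((n div 2 - a div 2) mod (n div 2)) + a mod 2) a = 0"
  by (rule nat_eq_via_div2_mod2) (simp_all add: mod_add_left_eq)

lemma bicyclic_mul_multiple:
  "bicyclic_mul n (2 * (k * (x div 2) mod (n div 2)) + k * x mod 2) x
     = 2 * (Suc k * (x div 2) mod (n div 2)) + Suc k * x mod 2"
proof (rule nat_eq_via_div2_mod2)
  show "bicyclic_mul n (2 * (k * (x div 2) mod (n div 2)) + k * x mod 2) x div 2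
          = (2 * (Suc k * (x div 2) mod (n div 2)) + Suc k * x mod 2) div 2"
    by (simp add: mod_add_left_eq add.commute[of "k * (x div 2)"])
  show "bicyclic_mul n (2 * (k * (x div 2) mod (n div 2)) + k * x mod 2) x mod 2
          = (2 * (Suc k * (x div 2) mod (n div 2)) + Suc k * x mod 2) mod 2"
    by (simp add: add.assoc mod_add_left_eq add.commute[of "k * x"])
qed

lemma comm_group_cyclic:
  assumes "0 < n"
  shows "comm_group \<lparr>carrier = {..<n}, monoid.mult = cyclic_mul n, one = 0\<rparr>"
proof (rule comm_groupI, goal_cases)
  case (6 x)
  then show ?case
    using assms by (intro bexI[of _ "(n - x) mod n"]) (auto simp: cyclic_mul_def mod_add_left_eq)
qed (use assms in \<open>auto simp: cyclic_mul_def mod_add_left_eq mod_add_right_eq ac_simps\<close>)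

lemma div2_less_half:
  assumes "even n" "x < n"
  shows "x div 2 < n div (2::nat)"
proof -
  have "n div 2 * 2 = n"
    using assms(1) by simp
  then show ?thesis
    using assms(2) by (intro less_mult_imp_div_less) simp
qed

lemma bicyclic_label_less:
  assumes "0 < n" "even n"
  shows "2 * (a mod (n div 2)) + b mod 2 < (n::nat)"
proof -
  have "a mod (n div 2) < n div 2" "b mod 2 < 2"
    using assms by auto
  then show ?thesis
    using assms(2) by (auto elim!: evenE)
qed

lemma comm_group_bicyclic:
  assumes "0 < n" "even n"
  shows "comm_group \<lparr>carrier = {..<n}, monoid.mult = bicyclic_mul n, one = 0\<rparr>"
proof (rule comm_groupI, goal_cases)
  case (1 x y)
  show ?case
    using bicyclic_label_less[OF assms, of "x div 2 + y div 2" "x + y"] by (simp add: bicyclic_mul_def)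
next
  case 2
  show ?case
    using assms by simp
next
  case (3 x y z)
  show ?case
    by (simp add: bicyclic_mul_assoc)
next
  case (4 x y)
  show ?case
    by (simp add: bicyclic_mul_commute)
next
  case (5 x)
  then show ?case
    using div2_less_half[OF assms(2)] by (simp add: bicyclic_mul_0)
next
  case (6 x)
  define y where "y = 2 * ((n div 2 - x div 2) mod (n div 2)) + x mod 2"
  have "y < n"
    using bicyclic_label_less[OF assms] by (simp add: y_def)
  moreover have "bicyclic_mul n y x = 0"
    using div2_less_half[OF assms(2)] 6 by (simp add: y_def bicyclic_mul_inverse)
  ultimately show ?case
    by auto
qed

lemma tab_grp_cyclic: "0 < n \<Longrightarrow> tab_grp n (cyclic_mul n) = \<lparr>carrier = {..<n}, monoid.mult = cyclic_mul n, one = 0\<rparr>"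
  by (intro tab_grp_eqI comm_group_cyclic)

lemma tab_grp_bicyclic:
  "0 < n \<Longrightarrow> even n \<Longrightarrow> tab_grp n (bicyclic_mul n) = \<lparr>carrier = {..<n}, monoid.mult = bicyclic_mul n, one = 0\<rparr>"
  by (intro tab_grp_eqI comm_group_bicyclic)

lemma abtab_cyclic: "0 < n \<Longrightarrow> abtab n (cyclic_mul n)"
  and abtab_bicyclic: "0 < n \<Longrightarrow> even n \<Longrightarrow> abtab n (bicyclic_mul n)"
  by (auto intro: abtabI comm_group_cyclic comm_group_bicyclic)

lemma one_tab_grp_cyclic [simp]: "0 < n \<Longrightarrow> \<one>\<^bsub>tab_grp n (cyclic_mul n)\<^esub> = 0"
  and one_tab_grp_bicyclic [simp]: "0 < n \<Longrightarrow> even n \<Longrightarrow> \<one>\<^bsub>tab_grp n (bicyclic_mul n)\<^esub> = 0"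
  by (simp_all add: tab_grp_cyclic tab_grp_bicyclic)

lemma cyclic_pow_one:
  assumes "1 < n"
  shows "1 [^]\<^bsub>tab_grp n (cyclic_mul n)\<^esub> (k::nat) = k mod n"
  using assms by (induction k) (simp_all add: cyclic_mul_def mod_Suc_eq)

lemma bicyclic_pow:
  assumes "0 < n" "even n"
  shows "x [^]\<^bsub>tab_grp n (bicyclic_mul n)\<^esub> k = 2 * (k * (x div 2) mod (n div 2)) + k * x mod 2"
  using assms by (induction k) (simp_all add: bicyclic_mul_multiple)

lemma bicyclic_pow_half:
  assumes "0 < n" "4 dvd n"
  shows "x [^]\<^bsub>tab_grp n (bicyclic_mul n)\<^esub> (n div 2) = 0"
proof -
  have "even n" "even (n div 2)"
    using assms(2) by (auto simp: dvd_def)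
  then show ?thesis
    using bicyclic_pow[OF assms(1)] by simp
qed

lemma cyclic_not_iso_bicyclic:
  assumes "0 < n" "4 dvd n"
  shows "\<not> tab_grp n (cyclic_mul n) \<cong> tab_grp n (bicyclic_mul n)"
proof
  let ?C = "tab_grp n (cyclic_mul n)" and ?B = "tab_grp n (bicyclic_mul n)"
  assume "?C \<cong> ?B"
  then obtain h where h: "h \<in> iso ?C ?B"
    by (auto simp: is_iso_def)
  have even: "even n" and n: "1 < n" "n div 2 < n"
    using assms by (auto simp: dvd_def)
  have groups: "group ?C" "group ?B"
    using abtab_group abtab_cyclic abtab_bicyclic assms(1) even by blast+
  have hom: "h \<in> hom ?C ?B"
    using h by (simp add: iso_def)
  have "h (n div 2) = h (1 [^]\<^bsub>?C\<^esub> (n div 2))"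
    using cyclic_pow_one[OF n(1)] n(2) by simp
  also have "\<dots> = h 1 [^]\<^bsub>?B\<^esub> (n div 2)"
    using hom_nat_pow[OF hom _ groups] n(1) by simp
  also have "\<dots> = h 0"
    using bicyclic_pow_half[OF assms] hom_one[OF hom groups] assms(1) even by simp
  finally have "n div 2 = 0"
    using h n assms(1) by (auto simp: iso_def bij_betw_def inj_on_def)
  then show False
    using n(2) even assms(1) by auto
qed

lemma parity_hom:
  assumes "0 < n" "even n"
  shows "(\<lambda>x. x mod 2) \<in> hom (tab_grp n (cyclic_mul n)) (tab_grp 2 (cyclic_mul 2))"
  using assms by (auto simp: hom_def cyclic_mul_def mod_mod_cancel mod_add_eq)

lemma relabel_cyclic_not_generated_by_evens:
  assumes "0 < n" "even n" "bij_betw \<sigma> {..<n} {..<n}" "S \<subseteq> {..<n}" "\<forall>x\<in>S. even (\<sigma> x)"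
  shows "generate (tab_grp n (relabel n \<sigma> (cyclic_mul n))) S \<noteq> {..<n}"
proof
  let ?G = "tab_grp n (relabel n \<sigma> (cyclic_mul n))" and ?Z2 = "tab_grp 2 (cyclic_mul 2)"
  let ?p = "(\<lambda>x. x mod 2) \<circ> \<sigma>"
  have groups: "group ?G" "group ?Z2"
    using abtab_group abtab_relabel abtab_cyclic assms(1,3) by auto
  have "?p \<in> hom ?G ?Z2"
    using hom_compose[OF iso_imp_homomorphism[OF relabel_iso] parity_hom] abtab_cyclic assms(1-3) by blast
  then have "group_hom ?G ?Z2 ?p"
    using groups by (simp add: group_hom_def group_hom_axioms_def)
  moreover have "S \<subseteq> kernel ?G ?Z2 ?p"
    using assms(4,5) by (auto simp: kernel_def)
  ultimately have "generate ?G S \<subseteq> kernel ?G ?Z2 ?p"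
    using group.generate_subgroup_incl[OF groups(1)] group_hom.subgroup_kernel by blast
  moreover assume "generate ?G S = {..<n}"
  moreover have "1 \<in> \<sigma> ` {..<n}"
    using assms(1,2) bij_betw_imp_surj_on[OF assms(3)] by (auto elim!: evenE)
  then obtain l where "l < n" "\<sigma> l = 1"
    by auto
  ultimately show False
    by (auto simp: kernel_def)
qed

section \<open>Bases and presentations\<close>

lemma list_prod_in_subgroup:
  assumes "subgroup H G" "set xs \<subseteq> H"
  shows "list_prod G xs \<in> H"
  using assms(2)
  by (induction xs) (simp_all add: list_prod_def subgroup.one_closed[OF assms(1)] subgroup.m_closed[OF assms(1)])

lemma list_prod_ones:
  assumes "monoid G" "\<forall>x\<in>set xs. x = \<one>\<^bsub>G\<^esub>"
  shows "list_prod G xs = \<one>\<^bsub>G\<^esub>"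
  using assms(2) by (induction xs) (simp_all add: list_prod_def monoid.l_one[OF assms(1)] monoid.one_closed[OF assms(1)])

lemma is_basis_bij:
  "is_basis G as \<Longrightarrow>
     bij_betw (list_prod G) {hs. length hs = length as \<and> (\<forall>i<length as. hs ! i \<in> generate G {as ! i})}
       (carrier G)"
  by (simp add: is_basis_def internal_direct_product_def)

lemma basis_generates:
  fixes G (structure)
  assumes "group G" "is_basis G as"
  shows "generate G (set as) = carrier G"
proof
  interpret group G by fact
  have sub: "set as \<subseteq> carrier G"
    using assms(2) by (simp add: is_basis_def)
  show "generate G (set as) \<subseteq> carrier G"
    using generate_incl[OF sub] .
  show "carrier G \<subseteq> generate G (set as)"
  proof
    fix x assume "x \<in> carrier G"
    then obtain hs where hs: "length hs = length as" "\<forall>i<length as. hs ! i \<in> generate G {as ! i}"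
      "x = list_prod G hs"
      using is_basis_bij[OF assms(2)] unfolding bij_betw_def by (force simp: image_iff)
    have "hs ! i \<in> generate G (set as)" if "i < length hs" for i
      using hs that mono_generate[of "{as ! i}" "set as"] by auto
    then have "set hs \<subseteq> generate G (set as)"
      by (auto simp: in_set_conv_nth)
    then show "x \<in> generate G (set as)"
      using list_prod_in_subgroup[OF generate_is_subgroup[OF sub]] hs(3) by simp
  qed
qed

lemma basis_length:
  fixes G (structure)
  assumes "group G" "finite (carrier G)" "is_basis G as"
  shows "2 ^ length as \<le> card (carrier G)"
proof -
  interpret group G by fact
  let ?T = "{hs. length hs = length as \<and> (\<forall>i<length as. hs ! i \<in> generate G {as ! i})}"
  have bij: "bij_betw (list_prod G) ?T (carrier G)"
    using is_basis_bij[OF assms(3)] .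
  have nontrivial: "as ! i \<noteq> \<one>" if "i < length as" for i
  proof
    assume "as ! i = \<one>"
    then have "\<one> \<in> set as"
      using nth_mem[OF that] by metis
    then show False
      using assms(3) generate_one by (auto simp: is_basis_def)
  qed
  define select where "select S = map (\<lambda>i. if i \<in> S then as ! i else \<one>) [0..<length as]" for S
  have select_nth: "select S ! i = (if i \<in> S then as ! i else \<one>)" if "i < length as" for S i
    using that by (simp add: select_def)
  have sub: "select ` Pow {..<length as} \<subseteq> ?T"
    using select_nth generate.incl[of _ _ G] generate.one[of G] by (auto simp: select_def)
  have inj: "inj_on select (Pow {..<length as})"
  proof (rule inj_onI)
    fix S1 S2 assume S: "S1 \<in> Pow {..<length as}" "S2 \<in> Pow {..<length as}" "select S1 = select S2"
    have "i \<in> S1 \<longleftrightarrow> i \<in> S2" if "i < length as" for i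
      using select_nth[OF that, of S1] select_nth[OF that, of S2] S(3) nontrivial[OF that] by metis
    with S(1,2) show "S1 = S2"
      by blast
  qed
  have "finite ?T"
    using bij assms(2) bij_betw_finite by blast
  have "2 ^ length as = card (select ` Pow {..<length as})"
    using inj by (simp add: card_image card_Pow)
  also have "\<dots> \<le> card ?T"
    using card_mono[OF \<open>finite ?T\<close> sub] .
  also have "\<dots> = card (carrier G)"
    using bij_betw_same_card[OF bij] .
  finally show ?thesis .
qed

lemma word_size_ge_length: "length w \<le> word_size w"
  by (induction w) (auto simp: word_size_def)

lemma card_relation_indices:
  "card (\<Union>r\<in>set rels. fst ` (set (fst r) \<union> set (snd r))) \<le> rels_size rels"
proof (induction rels)
  case Nil
  then show ?case
    by (simp add: rels_size_def)
next
  case (Cons r rels)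
  have "card (fst ` (set (fst r) \<union> set (snd r))) \<le> length (fst r) + length (snd r)"
    using card_image_le[of "set (fst r) \<union> set (snd r)" fst] card_Un_le[of "set (fst r)" "set (snd r)"]
      card_length[of "fst r"] card_length[of "snd r"] by simp
  also have "\<dots> \<le> word_size (fst r) + word_size (snd r)"
    using word_size_ge_length add_mono by blast
  moreover have "rels_size (r # rels) = 1 + word_size (fst r) + word_size (snd r) + rels_size rels"
    by (simp add: rels_size_def)
  ultimately show ?case
    using Cons.IH card_Un_le[of "fst ` (set (fst r) \<union> set (snd r))" "\<Union>r\<in>set rels. fst ` (set (fst r) \<union> set (snd r))"]
    by simp
qed

lemma relvec_nonzero_index:
  assumes "i < t" "relvec t r ! i \<noteq> 0"
  shows "i \<in> fst ` (set (fst r) \<union> set (snd r))"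
proof (rule ccontr)
  assume "i \<notin> fst ` (set (fst r) \<union> set (snd r))"
  then have "filter (\<lambda>p. fst p = i) (fst r) = []" "filter (\<lambda>p. fst p = i) (snd r) = []"
    by (auto simp: filter_empty_conv)
  then have "relvec t r ! i = 0"
    using assms(1) by (simp add: relvec_def expvec_def)
  with assms(2) show False
    by contradiction
qed

lemma presentation_length:
  fixes G (structure)
  assumes "group G" "finite (carrier G)" "is_presentation G gs rels"
  shows "length gs \<le> rels_size rels"
proof -
  interpret group G by fact
  let ?I = "\<Union>r\<in>set rels. fst ` (set (fst r) \<union> set (snd r))"
  have "i \<in> ?I" if i: "i < length gs" for i
  proof -
    define v where "v = map (\<lambda>l. if l = i then int (card (carrier G)) else 0) [0..<length gs]"
    have "gs ! l \<in> carrier G" if "l < length gs" for l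
      using assms(3) that by (auto simp: is_presentation_def)
    then have "\<forall>x\<in>set (map (\<lambda>l. gs ! l [^] (v ! l)) [0..<length gs]). x = \<one>"
      using pow_order_eq_1 by (auto simp: v_def int_pow_int Coset.order_def)
    then have "list_prod G (map (\<lambda>l. gs ! l [^] (v ! l)) [0..<length gs]) = \<one>"
      by (rule list_prod_ones[OF monoid_axioms])
    moreover have "length v = length gs"
      by (simp add: v_def)
    ultimately obtain cs where "\<forall>l<length gs. v ! l = (\<Sum>j<length rels. cs ! j * relvec (length gs) (rels ! j) ! l)"
      using assms(3) unfolding is_presentation_def by blast
    moreover have "v ! i \<noteq> 0"
      using i assms(2) one_closed by (auto simp: v_def card_gt_0_iff)
    ultimately have "(\<Sum>j<length rels. cs ! j * relvec (length gs) (rels ! j) ! i) \<noteq> 0"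
      using i by simp
    then obtain j where "j < length rels" "relvec (length gs) (rels ! j) ! i \<noteq> 0"
      by (auto elim: sum.not_neutral_contains_not_neutral)
    then show ?thesis
      using relvec_nonzero_index[OF i] nth_mem by blast
  qed
  then have "card {..<length gs} \<le> card ?I"
    by (intro card_mono) auto
  then show ?thesis
    using card_relation_indices[of rels] by simp
qed

lemma card_evens: "even n \<Longrightarrow> card {x. x < n \<and> even x} = n div 2"
proof -
  assume "even n"
  then have "{x. x < n \<and> even x} = (\<lambda>y. 2 * y) ` {..<n div 2}"
    by (auto elim!: evenE)
  then show ?thesis
    by (simp add: card_image inj_on_def)
qed

lemma bicyclic_agrees_with_cyclic_on_evens:
  assumes "even n" "a \<in> {x. x < n \<and> even x}" "b \<in> {x. x < n \<and> even x}"
  shows "bicyclic_mul n a b = cyclic_mul n a b \<and> cyclic_mul n a b \<in> {x. x < n \<and> even x}"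
proof -
  obtain a' b' h where ab: "a = 2 * a'" "b = 2 * b'" and n: "n = 2 * h"
    using assms by (auto elim!: evenE)
  have sum: "a + b = 2 * (a' + b')"
    using ab by simp
  have "cyclic_mul n a b = 2 * ((a' + b') mod h)"
    unfolding cyclic_mul_def n sum by (rule mod_mult_mult1)
  moreover have "bicyclic_mul n a b = 2 * ((a' + b') mod h)"
    by (simp add: bicyclic_mul_def ab n)
  moreover have "(a' + b') mod h < h"
    using assms(2) ab n by simp
  ultimately show ?thesis
    using n by simp
qed

lemma four_mult_le_pow2: "4 \<le> l \<Longrightarrow> 4 * l \<le> (2::nat) ^ l"
  by (induction l rule: dec_induct) auto

lemma four_mult_le_if_pow2_le:
  assumes "16 \<le> n" "2 ^ l \<le> n"
  shows "4 * l \<le> n"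
proof (rule ccontr)
  assume "\<not> 4 * l \<le> n"
  then have "4 \<le> l"
    using assms(1) by simp
  then show False
    using four_mult_le_pow2 assms(2) \<open>\<not> 4 * l \<le> n\<close> by fastforce
qed

lemma four_mult_powr_le:
  assumes "16 \<le> x" "e \<le> 1 / 2"
  shows "4 * x powr e \<le> (x::real)"
proof -
  have "x powr e \<le> x powr (1 / 2)"
    using assms by (intro powr_mono) auto
  also have "\<dots> = sqrt x"
    using assms(1) by (simp add: powr_half_sqrt)
  also have "4 * sqrt x \<le> sqrt x * sqrt x"
    using real_sqrt_le_mono[OF assms(1)] assms(1) by (intro mult_right_mono) auto
  finally show ?thesis
    using assms(1) by simp
qed

lemma omega_lin_multiplesI:
  assumes "0 < c" "\<forall>\<^sub>F k in sequentially. \<exists>q\<in>Inp (c * k). k \<le> cost q (A (c * k))"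
  shows "omega_lin Inp A"
proof -
  obtain K where K: "\<And>k. K \<le> k \<Longrightarrow> \<exists>q\<in>Inp (c * k). k \<le> cost q (A (c * k))"
    using assms(2) by (auto simp: eventually_sequentially)
  have "\<exists>n\<ge>N. \<exists>q\<in>Inp n. 1 / real c * real n \<le> real (cost q (A n))" for N
  proof -
    have "K \<le> max N K"
      by simp
    then obtain q where "q \<in> Inp (c * max N K)" "max N K \<le> cost q (A (c * max N K))"
      using K by blast
    moreover have "N \<le> c * max N K"
      using assms(1) by (cases c) auto
    ultimately show ?thesis
      using assms(1) by (intro exI[of _ "c * max N K"]) auto
  qed
  then show ?thesis
    unfolding omega_lin_def frequently_sequentially using assms(1) by (intro exI[of _ "1 / real c"]) auto
qed

lemma isomorphism_test_lower_bound:
  assumes correct: "\<forall>n mG mH. abtab n mG \<and> abtab n mH \<longrightarrow>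
                      (run (orc2 n mG mH) (A n) \<longleftrightarrow> tab_grp n mG \<cong> tab_grp n mH)"
  shows "omega_lin inputs2 A"
proof (rule omega_lin_multiplesI[of 12])
  show "\<forall>\<^sub>F k in sequentially. \<exists>q\<in>inputs2 (12 * k). k \<le> cost q (A (12 * k))"
  proof (rule eventually_sequentiallyI[of 1])
    fix k :: nat
    assume "1 \<le> k"
    define n where "n = 12 * k"
    let ?V = "{x. x < n \<and> even x}" and ?C = "cyclic_mul n"
    have n: "0 < n" "even n" "4 dvd n" "3 * k + 0 \<le> card ?V"
      using \<open>1 \<le> k\<close> card_evens[of n] by (auto simp: n_def)
    obtain \<sigma> where \<sigma>: "bij_betw \<sigma> {..<n} {..<n}"
      and outcome: "k \<le> cost (orc2 n ?C (relabel n \<sigma> (bicyclic_mul n))) (A n) \<or>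
        run (orc2 n ?C (relabel n \<sigma> (bicyclic_mul n))) (A n) = run (orc2 n ?C (relabel n \<sigma> ?C)) (A n)"
      using adversary[where V = ?V and opA = "bicyclic_mul n" and opB = ?C and t = "A n" and labels = "\<lambda>_. []",
          OF table_oracle_orc2 _ bicyclic_agrees_with_cyclic_on_evens n(4)] n(2) by auto
    let ?mA = "relabel n \<sigma> (bicyclic_mul n)" and ?mB = "relabel n \<sigma> ?C"
    have ab: "abtab n ?C" "abtab n ?mA" "abtab n ?mB"
      using abtab_cyclic abtab_bicyclic abtab_relabel \<sigma> n by auto
    have "k \<le> cost (orc2 n ?C ?mA) (A n)"
    proof (rule ccontr)
      assume "\<not> ?thesis"
      moreover have "run (orc2 n ?C ?mB) (A n)"
        using correct ab relabel_is_iso[OF ab(1) \<sigma>] by blast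
      ultimately have "tab_grp n ?C \<cong> tab_grp n ?mA"
        using outcome correct ab by auto
      also have "tab_grp n ?mA \<cong> tab_grp n (bicyclic_mul n)"
        using relabel_iso[OF abtab_bicyclic \<sigma>] n by (auto intro: is_isoI)
      finally show False
        using cyclic_not_iso_bicyclic n by blast
    qed
    then show "\<exists>q\<in>inputs2 (12 * k). k \<le> cost q (A (12 * k))"
      using ab by (auto simp: inputs2_def n_def)
  qed
qed simp

lemma generating_list_lower_bound:
  fixes A :: "nat \<Rightarrow> 'o dtree" and gens :: "'o \<Rightarrow> nat list"
  assumes "\<forall>\<^sub>F n in sequentially. \<forall>mul. abtab n mul \<longrightarrow>
             set (gens (run (orc n mul) (A n))) \<subseteq> {..<n} \<and>
             generate (tab_grp n mul) (set (gens (run (orc n mul) (A n)))) = {..<n} \<and>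
             4 * length (gens (run (orc n mul) (A n))) \<le> n"
  shows "omega_lin inputs1 A"
proof (rule omega_lin_multiplesI[of 12])
  obtain N where correct: "\<And>n mul. N \<le> n \<Longrightarrow> abtab n mul \<Longrightarrow>
             set (gens (run (orc n mul) (A n))) \<subseteq> {..<n} \<and>
             generate (tab_grp n mul) (set (gens (run (orc n mul) (A n)))) = {..<n} \<and>
             4 * length (gens (run (orc n mul) (A n))) \<le> n"
    using assms unfolding eventually_sequentially by blast
  show "\<forall>\<^sub>F k in sequentially. \<exists>q\<in>inputs1 (12 * k). k \<le> cost q (A (12 * k))"
  proof (rule eventually_sequentiallyI[of "Suc N"])
    fix k :: nat
    assume "Suc N \<le> k"
    \<comment> \<open>The \<open>6 * k\<close> even labels leave room for \<open>3 * k\<close> labels committed by \<open>k\<close> queries and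
      \<open>3 * k\<close> output labels.\<close>
    define n where "n = 12 * k"
    let ?V = "{x. x < n \<and> even x}" and ?C = "cyclic_mul n"
    have n: "0 < n" "even n" "N \<le> n" "3 * k + 3 * k \<le> card ?V"
      using \<open>Suc N \<le> k\<close> card_evens[of n] by (auto simp: n_def)
    obtain \<sigma> where \<sigma>: "bij_betw \<sigma> {..<n} {..<n}"
      and outcome: "k \<le> cost (orc n (relabel n \<sigma> ?C)) (A n) \<or>
        (set (gens (run (orc n (relabel n \<sigma> ?C)) (A n))) \<subseteq> {..<n} \<longrightarrow>
         length (gens (run (orc n (relabel n \<sigma> ?C)) (A n))) \<le> 3 * k \<longrightarrow>
         \<sigma> ` set (gens (run (orc n (relabel n \<sigma> ?C)) (A n))) \<subseteq> ?V)"
      using adversary[where n = n and V = ?V and opA = ?C and opB = ?C and t = "A n" and labels = gens,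
          OF table_oracle_orc _ _ n(4)] bicyclic_agrees_with_cyclic_on_evens[OF n(2)] by blast
    let ?m = "relabel n \<sigma> ?C"
    have ab: "abtab n ?m"
      using abtab_relabel[OF abtab_cyclic \<sigma>] n by simp
    have "k \<le> cost (orc n ?m) (A n)"
    proof (rule ccontr)
      let ?S = "set (gens (run (orc n ?m) (A n)))"
      assume "\<not> ?thesis"
      moreover have "?S \<subseteq> {..<n}" "generate (tab_grp n ?m) ?S = {..<n}"
        "length (gens (run (orc n ?m) (A n))) \<le> 3 * k"
        using correct[OF n(3) ab] by (auto simp: n_def)
      ultimately show False
        using outcome relabel_cyclic_not_generated_by_evens[OF n(1,2) \<sigma>, of ?S] by auto
    qed
    then show "\<exists>q\<in>inputs1 (12 * k). k \<le> cost q (A (12 * k))"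
      using ab by (auto simp: inputs1_def n_def)
  qed
qed simp

lemma basis_lower_bound:
  assumes correct: "\<forall>n mul. abtab n mul \<longrightarrow> is_basis (tab_grp n mul) (run (orc n mul) (A n))"
  shows "omega_lin inputs1 A"
proof (rule generating_list_lower_bound[where gens = id])
  show "\<forall>\<^sub>F n in sequentially. \<forall>mul. abtab n mul \<longrightarrow>
          set (id (run (orc n mul) (A n))) \<subseteq> {..<n} \<and>
          generate (tab_grp n mul) (set (id (run (orc n mul) (A n)))) = {..<n} \<and>
          4 * length (id (run (orc n mul) (A n))) \<le> n"
  proof (rule eventually_sequentiallyI[of 16], intro allI impI)
    fix n mul
    assume "16 \<le> n" "abtab n mul"
    then have group: "group (tab_grp n mul)" and basis: "is_basis (tab_grp n mul) (run (orc n mul) (A n))"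
      using abtab_group correct by auto
    have "2 ^ length (run (orc n mul) (A n)) \<le> n"
      using basis_length[OF group _ basis] by simp
    then show "set (id (run (orc n mul) (A n))) \<subseteq> {..<n} \<and>
          generate (tab_grp n mul) (set (id (run (orc n mul) (A n)))) = {..<n} \<and>
          4 * length (id (run (orc n mul) (A n))) \<le> n"
      using basis basis_generates[OF group basis] four_mult_le_if_pow2_le \<open>16 \<le> n\<close>
      by (simp add: is_basis_def)
  qed
qed

lemma presentation_lower_bound:
  assumes "\<epsilon> \<longlonglongrightarrow> 0"
    and correct: "\<forall>n mul. abtab n mul \<longrightarrow>
        is_presentation (tab_grp n mul) (fst (run (orc n mul) (A n))) (snd (run (orc n mul) (A n))) \<and>
        real (rels_size (snd (run (orc n mul) (A n)))) \<le> real n powr \<epsilon> n"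
  shows "omega_lin inputs1 A"
proof (rule generating_list_lower_bound[where gens = fst])
  have "\<forall>\<^sub>F n in sequentially. \<epsilon> n < 1 / 2 \<and> 16 \<le> n"
    using order_tendstoD(2)[OF assms(1), of "1 / 2"] eventually_ge_at_top[of 16]
    by (auto intro: eventually_conj)
  then show "\<forall>\<^sub>F n in sequentially. \<forall>mul. abtab n mul \<longrightarrow>
          set (fst (run (orc n mul) (A n))) \<subseteq> {..<n} \<and>
          generate (tab_grp n mul) (set (fst (run (orc n mul) (A n)))) = {..<n} \<and>
          4 * length (fst (run (orc n mul) (A n))) \<le> n"
  proof (rule eventually_mono, intro allI impI)
    fix n mul
    assume n: "\<epsilon> n < 1 / 2 \<and> 16 \<le> n" and "abtab n mul"
    then have group: "group (tab_grp n mul)"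
      and pres: "is_presentation (tab_grp n mul) (fst (run (orc n mul) (A n))) (snd (run (orc n mul) (A n)))"
      and size: "real (rels_size (snd (run (orc n mul) (A n)))) \<le> real n powr \<epsilon> n"
      using abtab_group correct by auto
    have "4 * real (length (fst (run (orc n mul) (A n)))) \<le> 4 * real n powr \<epsilon> n"
      using presentation_length[OF group _ pres] size by simp
    also have "\<dots> \<le> real n"
      using four_mult_powr_le[of "real n" "\<epsilon> n"] n by simp
    finally show "set (fst (run (orc n mul) (A n))) \<subseteq> {..<n} \<and>
          generate (tab_grp n mul) (set (fst (run (orc n mul) (A n)))) = {..<n} \<and>
          4 * length (fst (run (orc n mul) (A n))) \<le> n"
      using pres by (simp add: is_presentation_def)
  qed
qed

theorem mainTheorem19:
  shows
    "(\<forall>A :: nat \<Rightarrow> bool dtree.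
        (\<forall>n mG mH. abtab n mG \<and> abtab n mH \<longrightarrow>
           (run (orc2 n mG mH) (A n) \<longleftrightarrow> tab_grp n mG \<cong> tab_grp n mH))
        \<longrightarrow> omega_lin inputs2 A)
   \<and> (\<forall>A :: nat \<Rightarrow> nat list dtree.
        (\<forall>n mul. abtab n mul \<longrightarrow> is_basis (tab_grp n mul) (run (orc n mul) (A n)))
        \<longrightarrow> omega_lin inputs1 A)
   \<and> (\<forall>A :: nat \<Rightarrow> (nat list \<times> relation list) dtree.
        (\<exists>\<epsilon> :: nat \<Rightarrow> real. \<epsilon> \<longlonglongrightarrow> 0 \<and>
           (\<forall>n mul. abtab n mul \<longrightarrow>
              is_presentation (tab_grp n mul) (fst (run (orc n mul) (A n)))
                (snd (run (orc n mul) (A n))) \<and>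
              real (rels_size (snd (run (orc n mul) (A n)))) \<le> real n powr \<epsilon> n))
        \<longrightarrow> omega_lin inputs1 A)"
  using isomorphism_test_lower_bound basis_lower_bound presentation_lower_bound by blast

end
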